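(* Let $\Delta$ be a finite, flag, simply connected simplicial complex and $\mathcal{P}_H$ as in the context. Let $e\cdot f\cdot g$ be a combinatorial 1-cycle in $\Delta$. Then for every $n\in\mathbb{Z}$, $\mathrm{Area}_{\mathcal{P}_H}(e^nf^ng^n)\le 3|n|^2$.
   Context: $\mathrm{Edge}(\Delta)$ is the set of directed edges of $\Delta$; for $e$ in it, $\iota e$, $\tau e$ are its initial and terminal vertices and $\overline{e}$ is the reversed edge. $e\cdot f\cdot g$ is a combinatorial 1-cycle if $\tau e=\iota f$, $\tau f=\iota g$, $\tau g=\iota e$. $\mathcal{P}_H=\langle\mathrm{Edge}(\Delta)\mid\mathcal{R}_H\rangle$ where $\mathcal{R}_H$ consists of the words $e\overline{e}$ ($e\in\mathrm{Edge}(\Delta)$) and $efg$, $e^{-1}f^{-1}g^{-1}$ for every combinatorial 1-cycle $e\cdot f\cdot g$. For a word $w$ representing the identity, $\mathrm{Area}_{\mathcal{P}_H}(w)$ is the least $m$ such that $w$ is freely equal to $\prod_{i=1}^m x_ir_ix_i^{-1}$ with $r_i\in\mathcal{R}_H^{\pm1}$. For a letter $e$ and $m\in\mathbb{Z}$, $e^m$ is the word of $m$ copies of $e$ if $m\ge0$ and $|m|$ copies of $e^{-1}$ if $m<0$. *)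

theory Defs
  imports "HOL-Analysis.Analysis"
begin

definition simplicial_complex :: "'v set set \<Rightarrow> bool" where
  "simplicial_complex \<Delta> \<longleftrightarrow>
     (\<forall>\<sigma>\<in>\<Delta>. finite \<sigma> \<and> \<sigma> \<noteq> {}) \<and>
     (\<forall>\<sigma>\<in>\<Delta>. \<forall>\<tau>. \<tau> \<subseteq> \<sigma> \<and> \<tau> \<noteq> {} \<longrightarrow> \<tau> \<in> \<Delta>)"

definition vertices :: "'v set set \<Rightarrow> 'v set" where
  "vertices \<Delta> = \<Union>\<Delta>"

definition flag_complex :: "'v set set \<Rightarrow> bool" where
  "flag_complex \<Delta> \<longleftrightarrow>
     (\<forall>\<sigma>. finite \<sigma> \<and> \<sigma> \<noteq> {} \<and> \<sigma> \<subseteq> vertices \<Delta> \<and>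
          (\<forall>u\<in>\<sigma>. \<forall>v\<in>\<sigma>. {u, v} \<in> \<Delta>) \<longrightarrow> \<sigma> \<in> \<Delta>)"

definition realization :: "('v::finite) set set \<Rightarrow> (real ^ 'v) set" where
  "realization \<Delta> = (\<Union>\<sigma>\<in>\<Delta>. convex hull ((\<lambda>v. axis v 1) ` \<sigma>))"

definition Edge :: "'v set set \<Rightarrow> ('v \<times> 'v) set" where
  "Edge \<Delta> = {(u, v). u \<noteq> v \<and> {u, v} \<in> \<Delta>}"

definition iota :: "'v \<times> 'v \<Rightarrow> 'v" where "iota e = fst e"
definition tau :: "'v \<times> 'v \<Rightarrow> 'v" where "tau e = snd e"
definition rev_edge :: "'v \<times> 'v \<Rightarrow> 'v \<times> 'v" where "rev_edge e = (snd e, fst e)"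

definition comb_1cycle :: "'v set set \<Rightarrow> 'v \<times> 'v \<Rightarrow> 'v \<times> 'v \<Rightarrow> 'v \<times> 'v \<Rightarrow> bool" where
  "comb_1cycle \<Delta> e f g \<longleftrightarrow> e \<in> Edge \<Delta> \<and> f \<in> Edge \<Delta> \<and> g \<in> Edge \<Delta> \<and>
     tau e = iota f \<and> tau f = iota g \<and> tau g = iota e"

text \<open>A letter is a generator together with a sign (True = x, False = x^-1).\<close>
type_synonym 'a word = "('a \<times> bool) list"

definition inv_word :: "'a word \<Rightarrow> 'a word" where
  "inv_word w = rev (map (\<lambda>(a, b). (a, \<not> b)) w)"

inductive reduce1 :: "'a word \<Rightarrow> 'a word \<Rightarrow> bool" where
  "reduce1 (xs @ [(a, b), (a, \<not> b)] @ ys) (xs @ ys)"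

definition freely_eq :: "'a word \<Rightarrow> 'a word \<Rightarrow> bool" where
  "freely_eq = (sup reduce1 reduce1\<inverse>\<inverse>)\<^sup>*\<^sup>*"

definition relators_H :: "'v set set \<Rightarrow> ('v \<times> 'v) word set" where
  "relators_H \<Delta> =
     {[(e, True), (rev_edge e, True)] | e. e \<in> Edge \<Delta>} \<union>
     {[(e, True), (f, True), (g, True)] | e f g. comb_1cycle \<Delta> e f g} \<union>
     {[(e, False), (f, False), (g, False)] | e f g. comb_1cycle \<Delta> e f g}"

definition area_witness :: "'a word set \<Rightarrow> 'a word \<Rightarrow> nat \<Rightarrow> bool" where
  "area_witness R w m \<longleftrightarrow>
     (\<exists>xs :: ('a word \<times> 'a word) list. length xs = m \<and>
        (\<forall>(x, r) \<in> set xs. r \<in> R \<or> inv_word r \<in> R) \<and>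
        freely_eq w (concat (map (\<lambda>(x, r). x @ r @ inv_word x) xs)))"

definition represents_identity :: "'a word set \<Rightarrow> 'a word \<Rightarrow> bool" where
  "represents_identity R w \<longleftrightarrow> (\<exists>m. area_witness R w m)"

definition Area :: "'a word set \<Rightarrow> 'a word \<Rightarrow> nat" where
  "Area R w = (LEAST m. area_witness R w m)"

definition letter_pow :: "'a \<Rightarrow> int \<Rightarrow> 'a word" where
  "letter_pow e m = (if m \<ge> 0 then replicate (nat m) (e, True) else replicate (nat (- m)) (e, False))"

end

theory Submission
  imports Defs
begin

text \<open>Only the two triangle relators x y z and x^-1 y^-1 z^-1 of the 1-cycle are needed.
  Each of x y and y x equals z^-1 modulo one relator, so y x can be traded for x y at
  cost 2, and moving one x across y^m costs 2m. Hence
  x^(m+1) y^(m+1) = x^m (x y^m) y ~ x^m y^m x y ~ x^m y^m z^-1 ~ z^-(m+1)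
  costs 2m + 1 + m^2 = (m+1)^2 relators by induction, and x^m y^m z^m is a product of
  m^2 conjugates of relators. So the area is even at most n^2.\<close>

definition inv_letter :: "'a \<times> bool \<Rightarrow> 'a \<times> bool" where
  "inv_letter l = (fst l, \<not> snd l)"

lemma inv_letter_inv_letter [simp]: "inv_letter (inv_letter l) = l"
  by (simp add: inv_letter_def)

lemma inv_word_Nil [simp]: "inv_word [] = []"
  by (simp add: inv_word_def)

lemma inv_word_Cons [simp]: "inv_word (l # w) = inv_word w @ [inv_letter l]"
  by (cases l) (simp add: inv_word_def inv_letter_def)

lemma inv_word_append [simp]: "inv_word (u @ v) = inv_word v @ inv_word u"
  by (simp add: inv_word_def)

lemma inv_word_inv_word [simp]: "inv_word (inv_word w) = w"
  by (induction w) simp_all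

lemma inv_word_replicate [simp]: "inv_word (replicate m l) = replicate m (inv_letter l)"
  by (induction m) (simp_all add: replicate_append_same[symmetric])

lemma equivclp_map:
  assumes "equivclp r x y" and "\<And>a b. r a b \<Longrightarrow> r (f a) (f b)"
  shows "equivclp r (f x) (f y)"
  using assms(1) by induction (auto intro: equivclp_into_equivclp assms(2))

lemma freely_eq_equivclp: "freely_eq = equivclp reduce1"
  by (simp add: freely_eq_def equivclp_def symclp_pointfree)

lemma freely_eq_refl [simp]: "freely_eq w w"
  by (simp add: freely_eq_equivclp)

lemma freely_eq_sym: "freely_eq u v \<Longrightarrow> freely_eq v u"
  by (simp add: freely_eq_equivclp equivclp_sym)

lemma freely_eq_trans [trans]: "freely_eq u v \<Longrightarrow> freely_eq v w \<Longrightarrow> freely_eq u w"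
  unfolding freely_eq_equivclp by (rule equivclp_trans)

lemma reduce1_append_both: "reduce1 u v \<Longrightarrow> reduce1 (a @ u @ b) (a @ v @ b)"
  by (induction rule: reduce1.induct) (metis append.assoc reduce1.intros)

lemma reduce1_inv_word: "reduce1 u v \<Longrightarrow> reduce1 (inv_word u) (inv_word v)"
proof (induction rule: reduce1.induct)
  case (1 xs a b ys)
  have "reduce1 (inv_word ys @ [(a, b), (a, \<not> b)] @ inv_word xs) (inv_word ys @ inv_word xs)"
    by (rule reduce1.intros)
  then show ?case by (simp add: inv_letter_def)
qed

lemma freely_eq_append_both: "freely_eq u v \<Longrightarrow> freely_eq (a @ u @ b) (a @ v @ b)"
  unfolding freely_eq_equivclp by (erule equivclp_map) (rule reduce1_append_both)

lemma freely_eq_inv_word: "freely_eq u v \<Longrightarrow> freely_eq (inv_word u) (inv_word v)"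
  unfolding freely_eq_equivclp by (erule equivclp_map) (rule reduce1_inv_word)

lemma freely_eq_cancel: "freely_eq (u @ x @ inv_word x @ v) (u @ v)"
proof (induction x arbitrary: u v)
  case Nil
  show ?case by simp
next
  case (Cons l x)
  obtain a b where l: "l = (a, b)" by (cases l)
  have "freely_eq (u @ (l # x) @ inv_word (l # x) @ v) ((u @ [l]) @ [inv_letter l] @ v)"
    using Cons.IH[of "u @ [l]" "inv_letter l # v"] by simp
  also have "freely_eq ((u @ [l]) @ [inv_letter l] @ v) (u @ v)"
    using r_into_equivclp[of reduce1, OF reduce1.intros[of u a b v]]
    by (simp add: l inv_letter_def freely_eq_equivclp)
  finally show ?case .
qed

lemma freely_eq_cancel': "freely_eq (u @ inv_word x @ x @ v) (u @ v)"
  using freely_eq_cancel[of u "inv_word x" v] by simp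

definition conjugate :: "'a word \<times> 'a word \<Rightarrow> 'a word" where
  "conjugate p = fst p @ snd p @ inv_word (fst p)"

lemma area_witness_conjugate_iff:
  "area_witness R w m \<longleftrightarrow>
     (\<exists>ps. length ps = m \<and> (\<forall>p \<in> set ps. snd p \<in> R \<or> inv_word (snd p) \<in> R) \<and>
        freely_eq w (concat (map conjugate ps)))"
  unfolding area_witness_def conjugate_def split_def by simp

lemma area_witness_freely_eq: "freely_eq w w' \<Longrightarrow> area_witness R w' m \<Longrightarrow> area_witness R w m"
  unfolding area_witness_conjugate_iff using freely_eq_trans by blast

lemma area_witness_Nil: "area_witness R [] 0"
  unfolding area_witness_conjugate_iff by simp

lemma area_witness_relator: "r \<in> R \<Longrightarrow> area_witness R r 1"
  unfolding area_witness_conjugate_iff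
  by (rule exI[of _ "[([], r)]"]) (simp add: conjugate_def)

lemma area_witness_append:
  assumes "area_witness R u k" and "area_witness R v l"
  shows "area_witness R (u @ v) (k + l)"
proof -
  obtain ps qs where ps: "length ps = k" "\<forall>p \<in> set ps. snd p \<in> R \<or> inv_word (snd p) \<in> R"
      "freely_eq u (concat (map conjugate ps))"
    and qs: "length qs = l" "\<forall>p \<in> set qs. snd p \<in> R \<or> inv_word (snd p) \<in> R"
      "freely_eq v (concat (map conjugate qs))"
    using assms unfolding area_witness_conjugate_iff by blast
  have "freely_eq (u @ v) (concat (map conjugate ps) @ v)"
    using freely_eq_append_both[OF ps(3), of "[]" v] by simp
  also have "freely_eq \<dots> (concat (map conjugate (ps @ qs)))"
    using freely_eq_append_both[OF qs(3), of "concat (map conjugate ps)" "[]"] by simp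
  finally show ?thesis
    unfolding area_witness_conjugate_iff using ps qs by (intro exI[of _ "ps @ qs"]) auto
qed

lemma freely_eq_conjugate_concat:
  "freely_eq (x @ concat (map conjugate ps) @ inv_word x)
     (concat (map (\<lambda>p. conjugate (x @ fst p, snd p)) ps))"
proof (induction ps)
  case Nil
  show ?case using freely_eq_cancel[of "[]" x "[]"] by simp
next
  case (Cons p ps)
  let ?C = "concat (map conjugate ps)"
  have "freely_eq (x @ conjugate p @ ?C @ inv_word x)
      ((x @ conjugate p) @ inv_word x @ x @ ?C @ inv_word x)"
    using freely_eq_sym[OF freely_eq_cancel'[of "x @ conjugate p" x "?C @ inv_word x"]] by simp
  also have "\<dots> = conjugate (x @ fst p, snd p) @ (x @ ?C @ inv_word x) @ []"
    by (simp add: conjugate_def)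
  also have "freely_eq \<dots> (conjugate (x @ fst p, snd p) @
      concat (map (\<lambda>p. conjugate (x @ fst p, snd p)) ps) @ [])"
    by (rule freely_eq_append_both[OF Cons.IH])
  finally show ?case by simp
qed

lemma area_witness_conjugate:
  assumes "area_witness R w m"
  shows "area_witness R (x @ w @ inv_word x) m"
proof -
  obtain ps where ps: "length ps = m" "\<forall>p \<in> set ps. snd p \<in> R \<or> inv_word (snd p) \<in> R"
      "freely_eq w (concat (map conjugate ps))"
    using assms unfolding area_witness_conjugate_iff by blast
  have "freely_eq (x @ w @ inv_word x) (x @ concat (map conjugate ps) @ inv_word x)"
    by (rule freely_eq_append_both[OF ps(3)])
  also note freely_eq_conjugate_concat
  finally show ?thesis
    unfolding area_witness_conjugate_iff using ps
    by (intro exI[of _ "map (\<lambda>p. (x @ fst p, snd p)) ps"]) (auto simp: comp_def)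
qed

lemma inv_word_concat_conjugate:
  "inv_word (concat (map conjugate ps)) =
     concat (map conjugate (rev (map (\<lambda>p. (fst p, inv_word (snd p))) ps)))"
  by (induction ps) (simp_all add: conjugate_def)

lemma area_witness_inv_word:
  assumes "area_witness R w m"
  shows "area_witness R (inv_word w) m"
proof -
  obtain ps where ps: "length ps = m" "\<forall>p \<in> set ps. snd p \<in> R \<or> inv_word (snd p) \<in> R"
      "freely_eq w (concat (map conjugate ps))"
    using assms unfolding area_witness_conjugate_iff by blast
  show ?thesis
    unfolding area_witness_conjugate_iff
    using ps freely_eq_inv_word[OF ps(3)] inv_word_concat_conjugate[of ps]
    by (intro exI[of _ "rev (map (\<lambda>p. (fst p, inv_word (snd p))) ps)"]) auto
qed

definition area_equiv :: "'a word set \<Rightarrow> 'a word \<Rightarrow> 'a word \<Rightarrow> nat \<Rightarrow> bool" where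
  "area_equiv R u v m \<longleftrightarrow> area_witness R (u @ inv_word v) m"

lemma area_equiv_refl: "area_equiv R w w 0"
  unfolding area_equiv_def
  using area_witness_freely_eq[OF _ area_witness_Nil] freely_eq_cancel[of "[]" w "[]"] by simp

lemma area_equiv_sym: "area_equiv R u v m \<Longrightarrow> area_equiv R v u m"
  unfolding area_equiv_def by (drule area_witness_inv_word) simp

lemma area_equiv_trans:
  assumes "area_equiv R u v k" and "area_equiv R v w l"
  shows "area_equiv R u w (k + l)"
proof -
  have "area_witness R (u @ inv_word v @ v @ inv_word w) (k + l)"
    using area_witness_append[OF assms[unfolded area_equiv_def]] by simp
  then show ?thesis
    unfolding area_equiv_def by (rule area_witness_freely_eq[OF freely_eq_sym[OF freely_eq_cancel']])
qed

lemma area_equiv_append_both: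
  assumes "area_equiv R u v m"
  shows "area_equiv R (a @ u @ b) (a @ v @ b) m"
proof -
  have "freely_eq ((a @ u) @ b @ inv_word b @ inv_word v @ inv_word a) ((a @ u) @ inv_word v @ inv_word a)"
    by (rule freely_eq_cancel)
  then show ?thesis
    using area_witness_conjugate[OF assms[unfolded area_equiv_def], of a]
    unfolding area_equiv_def by (simp add: area_witness_freely_eq)
qed

lemma area_equiv_inv_word:
  assumes "area_equiv R u v m"
  shows "area_equiv R (inv_word u) (inv_word v) m"
proof -
  have "area_witness R (inv_word u @ (v @ inv_word u) @ u) m"
    using area_witness_conjugate[OF area_witness_inv_word[OF assms[unfolded area_equiv_def]],
        of "inv_word u"]
    by simp
  moreover have "freely_eq (inv_word u @ v) (inv_word u @ (v @ inv_word u) @ u)"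
    using freely_eq_sym[OF freely_eq_cancel'[of "inv_word u @ v" u "[]"]] by simp
  ultimately show ?thesis
    unfolding area_equiv_def by (simp add: area_witness_freely_eq)
qed

lemma area_equiv_relator: "u @ inv_word v \<in> R \<Longrightarrow> area_equiv R u v 1"
  unfolding area_equiv_def by (rule area_witness_relator)

lemma area_equiv_move_across_power:
  assumes "area_equiv R [y, x] [x, y] c"
  shows "area_equiv R (replicate k y @ [x]) (x # replicate k y) (c * k)"
proof (induction k)
  case 0
  show ?case using area_equiv_refl by simp
next
  case (Suc k)
  have "area_equiv R (y # replicate k y @ [x]) ([y, x] @ replicate k y) (c * k)"
    using area_equiv_append_both[OF Suc.IH, where a = "[y]" and b = "[]"] by simp
  moreover have "area_equiv R ([y, x] @ replicate k y) ([x, y] @ replicate k y) c"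
    using area_equiv_append_both[OF assms, where a = "[]" and b = "replicate k y"] by simp
  ultimately show ?case
    using area_equiv_trans by (fastforce simp: add.commute)
qed

lemma area_equiv_commute_triangle:
  assumes "[x, y, z] \<in> R" and "[inv_letter x, inv_letter y, inv_letter z] \<in> R"
  shows "area_equiv R [y, x] [x, y] 2"
proof -
  have "area_equiv R [y, x] [inv_letter z] 1"
    using area_equiv_inv_word[OF area_equiv_relator[of "[inv_letter x, inv_letter y]" "[z]"]]
      assms(2) by simp
  moreover have "area_equiv R [inv_letter z] [x, y] 1"
    using area_equiv_sym[OF area_equiv_relator[of "[x, y]" "[inv_letter z]"]] assms(1) by simp
  ultimately have "area_equiv R [y, x] [x, y] (1 + 1)"
    by (rule area_equiv_trans)
  then show ?thesis
    by (simp add: numeral_2_eq_2)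
qed

lemma area_equiv_power_product:
  assumes "[x, y, z] \<in> R" and "[inv_letter x, inv_letter y, inv_letter z] \<in> R"
  shows "area_equiv R (replicate m x @ replicate m y) (replicate m (inv_letter z)) (m * m)"
proof (induction m)
  case 0
  show ?case using area_equiv_refl by simp
next
  case (Suc m)
  let ?xs = "replicate m x" and ?ys = "replicate m y" and ?zs = "replicate m (inv_letter z)"
  have "area_equiv R (?xs @ x # ?ys @ [y]) (?xs @ ?ys @ [x, y]) (2 * m)"
    using area_equiv_append_both[OF area_equiv_sym[OF area_equiv_move_across_power[OF
          area_equiv_commute_triangle[OF assms]]], where a = ?xs and b = "[y]"]
    by simp
  moreover have "area_equiv R (?xs @ ?ys @ [x, y]) (?xs @ ?ys @ [inv_letter z]) 1"
    using area_equiv_append_both[OF area_equiv_relator, where a = "?xs @ ?ys" and b = "[]"]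
      assms(1) by simp
  moreover have "area_equiv R (?xs @ ?ys @ [inv_letter z]) (?zs @ [inv_letter z]) (m * m)"
    using area_equiv_append_both[OF Suc.IH, where a = "[]" and b = "[inv_letter z]"] by simp
  ultimately have "area_equiv R (?xs @ x # ?ys @ [y]) (?zs @ [inv_letter z]) (2 * m + 1 + m * m)"
    by (blast intro: area_equiv_trans)
  moreover have "?xs @ x # ?ys @ [y] = replicate (Suc m) x @ replicate (Suc m) y"
    by (simp add: replicate_append_same)
  moreover have "?zs @ [inv_letter z] = replicate (Suc m) (inv_letter z)"
    by (simp add: replicate_append_same)
  moreover have "2 * m + 1 + m * m = Suc m * Suc m"
    by simp
  ultimately show ?case
    by (simp only:)
qed

lemma area_witness_triangle_power:
  assumes "[x, y, z] \<in> R" and "[inv_letter x, inv_letter y, inv_letter z] \<in> R"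
  shows "area_witness R (replicate m x @ replicate m y @ replicate m z) (m * m)"
proof -
  let ?w = "replicate m x @ replicate m y @ replicate m z"
  have "area_witness R (?w @ inv_word (replicate m (inv_letter z) @ replicate m z)) (m * m)"
    using area_equiv_append_both[OF area_equiv_power_product[OF assms],
        where a = "[]" and b = "replicate m z"]
    by (simp add: area_equiv_def)
  moreover have "freely_eq ?w (?w @ inv_word (replicate m (inv_letter z) @ replicate m z))"
    using freely_eq_sym[OF freely_eq_cancel[of ?w "replicate m (inv_letter z)" "[]"]] by simp
  ultimately show ?thesis
    by (rule area_witness_freely_eq[rotated])
qed

lemma letter_pow_eq_replicate: "letter_pow a n = replicate (nat \<bar>n\<bar>) (a, n \<ge> 0)"
  by (simp add: letter_pow_def)

theorem lemma4p3:
  fixes \<Delta> :: "('v::finite) set set"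
    and e f g :: "'v \<times> 'v"
    and n :: int
  assumes "simplicial_complex \<Delta>"
    and "finite \<Delta>"
    and "flag_complex \<Delta>"
    and "simply_connected (realization \<Delta>)"
    and "comb_1cycle \<Delta> e f g"
  shows "represents_identity (relators_H \<Delta>) (letter_pow e n @ letter_pow f n @ letter_pow g n)
    \<and> int (Area (relators_H \<Delta>) (letter_pow e n @ letter_pow f n @ letter_pow g n)) \<le> 3 * \<bar>n\<bar>^2"
proof -
  let ?R = "relators_H \<Delta>" and ?w = "letter_pow e n @ letter_pow f n @ letter_pow g n"
  define m where "m = nat \<bar>n\<bar>"
  have "[(e, b), (f, b), (g, b)] \<in> ?R" for b
    using assms(5) unfolding relators_H_def by (cases b) blast+
  then have "area_witness ?R ?w (m * m)"
    using area_witness_triangle_power[of "(e, n \<ge> 0)" "(f, n \<ge> 0)" "(g, n \<ge> 0)" ?R m]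
    by (simp add: inv_letter_def letter_pow_eq_replicate m_def)
  then have "represents_identity ?R ?w" and "Area ?R ?w \<le> m * m"
    unfolding represents_identity_def Area_def by (auto intro: Least_le)
  moreover have "int (m * m) = \<bar>n\<bar>^2"
    by (simp add: m_def power2_eq_square)
  ultimately have "int (Area ?R ?w) \<le> \<bar>n\<bar>^2"
    by (metis of_nat_mono)
  with \<open>represents_identity ?R ?w\<close> show ?thesis
    by simp
qed

end
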